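(* Let $n,\ell$ be positive integers and $0<\epsilon<0.5$. Let $\boldsymbol{c}\in\mathbb{Z}_2^n$ be "0"-$3$-dominant and $\ell$-run-length limited, and let $\boldsymbol{d}\in\mathbb{Z}_2^n$ be $\epsilon$-balanced. Then the DNA sequence $\tau^{-1}(\boldsymbol{c}\|\boldsymbol{d})$ is $3$-SSA, $\ell$-run-length limited and GC-$\epsilon$-balanced.
   Context: $\Sigma_{\rm DNA}=\{\mathrm{A},\mathrm{T},\mathrm{C},\mathrm{G}\}$ with complement $\overline{\mathrm A}=\mathrm T$, $\overline{\mathrm T}=\mathrm A$, $\overline{\mathrm C}=\mathrm G$, $\overline{\mathrm G}=\mathrm C$; the reverse-complement of $(x_1,\dots,x_n)$ is $(\overline{x_n},\dots,\overline{x_1})$. A DNA sequence is $m$-SSA if it has no two non-overlapping blocks of consecutive symbols of length $\ge m$ that are reverse-complements of each other. A binary sequence is "0"-$m$-dominant if every block of $m$ consecutive symbols contains more than $m/2$ zeros. A sequence is $\ell$-run-length limited if every maximal run of identical consecutive symbols has length at most $\ell$. A binary $\boldsymbol{d}\in\mathbb{Z}_2^n$ is $\epsilon$-balanced if $|\mathrm{wt}(\boldsymbol{d})/n-0.5|\le\epsilon$ (Hamming weight). For $\boldsymbol{x}\in\Sigma_{\rm DNA}^n$, $\mathrm{wt}_{\rm GC}(\boldsymbol{x})$ is the number of positions equal to G or C, and $\boldsymbol{x}$ is GC-$\epsilon$-balanced if $|\mathrm{wt}_{\rm GC}(\boldsymbol{x})/n-0.5|\le\epsilon$. $\tau(\mathrm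 T)=00$, $\tau(\mathrm C)=01$, $\tau(\mathrm A)=10$, $\tau(\mathrm G)=11$, extended symbolwise; for $\boldsymbol{x},\boldsymbol{y}\in\mathbb{Z}_2^n$, $\boldsymbol{x}\|\boldsymbol{y}=(x_1y_1,\dots,x_ny_n)$. *)

theory Defs
  imports Complex_Main
begin

datatype dna = A | T | C | G

fun comp :: "dna \<Rightarrow> dna" where
  "comp A = T" | "comp T = A" | "comp C = G" | "comp G = C"

definition revcomp :: "dna list \<Rightarrow> dna list" where
  "revcomp xs = rev (map comp xs)"

(* Binary sequences over Z_2 are bool lists: False = 0, True = 1. *)

fun tau :: "dna \<Rightarrow> bool \<times> bool" where
  "tau T = (False, False)" | "tau C = (False, True)"
| "tau A = (True, False)" | "tau G = (True, True)"

fun tau_inv :: "bool \<times> bool \<Rightarrow> dna" where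
  "tau_inv (False, False) = T" | "tau_inv (False, True) = C"
| "tau_inv (True, False) = A" | "tau_inv (True, True) = G"

definition interleave :: "bool list \<Rightarrow> bool list \<Rightarrow> (bool \<times> bool) list" where
  "interleave x y = zip x y"

definition tau_inv_seq :: "(bool \<times> bool) list \<Rightarrow> dna list" where
  "tau_inv_seq ps = map tau_inv ps"

(* block of length k starting at (0-based) position i *)
definition block :: "'a list \<Rightarrow> nat \<Rightarrow> nat \<Rightarrow> 'a list" where
  "block x i k = take k (drop i x)"

definition SSA :: "nat \<Rightarrow> dna list \<Rightarrow> bool" where
  "SSA m x \<longleftrightarrow> (\<forall>i j k. m \<le> k \<longrightarrow> i + k \<le> length x \<longrightarrow> j + k \<le> length x
      \<longrightarrow> (i + k \<le> j \<or> j + k \<le> i) \<longrightarrow> block x j k \<noteq> revcomp (block x i k))"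

definition zero_dominant :: "nat \<Rightarrow> bool list \<Rightarrow> bool" where
  "zero_dominant m x \<longleftrightarrow> (\<forall>i. i + m \<le> length x \<longrightarrow>
      real (length (filter (\<lambda>b. \<not> b) (block x i m))) > real m / 2)"

(* l-run-length limited: every run of identical consecutive symbols x_i..x_j
   (in particular every maximal run) has length at most l *)
definition rll :: "nat \<Rightarrow> 'a list \<Rightarrow> bool" where
  "rll l x \<longleftrightarrow> (\<forall>i j. i \<le> j \<longrightarrow> j < length x \<longrightarrow>
      (\<forall>k. i \<le> k \<and> k \<le> j \<longrightarrow> x ! k = x ! i) \<longrightarrow> j - i + 1 \<le> l)"

definition wt :: "bool list \<Rightarrow> nat" where
  "wt x = length (filter (\<lambda>b. b) x)"

definition balanced :: "real \<Rightarrow> bool list \<Rightarrow> bool" where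
  "balanced \<epsilon> d \<longleftrightarrow> \<bar>real (wt d) / real (length d) - 1/2\<bar> \<le> \<epsilon>"

definition wt_GC :: "dna list \<Rightarrow> nat" where
  "wt_GC x = length (filter (\<lambda>s. s = G \<or> s = C) x)"

definition GC_balanced :: "real \<Rightarrow> dna list \<Rightarrow> bool" where
  "GC_balanced \<epsilon> x \<longleftrightarrow> \<bar>real (wt_GC x) / real (length x) - 1/2\<bar> \<le> \<epsilon>"

end

theory Submission
  imports Defs
begin

text \<open>
  The first bit of \<open>\<tau>\<close> is exchanged with its negation by the Watson-Crick complement,
  while the second bit records membership in \<open>{G, C}\<close>. So \<open>\<tau>\<^sup>-\<^sup>1(c \<parallel> d)\<close> projects onto
  \<open>c\<close> and \<open>d\<close>, and reverse-complementation turns into reverse-negation on the \<open>c\<close>-track.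
  A block of length \<open>\<ge> 3\<close> and a reverse-complement copy of it would give two length-3
  windows of \<open>c\<close>, one the negated reversal of the other; but a "0"-3-dominant window has
  at most one 1, whereas the negation of such a window has at least two. Run lengths
  can only shrink under projection, and the GC-weight of \<open>\<tau>\<^sup>-\<^sup>1(c \<parallel> d)\<close> is the weight of \<open>d\<close>.
\<close>

lemma tau_tau_inv [simp]: "tau (tau_inv p) = p"
  by (cases p rule: tau_inv.cases) simp_all

lemma fst_tau_comp [simp]: "fst (tau (comp s)) = (\<not> fst (tau s))"
  by (cases s) simp_all

lemma snd_tau_iff_GC: "snd (tau s) \<longleftrightarrow> s = G \<or> s = C"
  by (cases s) simp_all

lemma map_tau_tau_inv_seq: "map tau (tau_inv_seq ps) = ps"
  by (simp add: tau_inv_seq_def comp_def)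

lemma length_block: "i + k \<le> length xs \<Longrightarrow> length (block xs i k) = k"
  by (simp add: block_def)

lemma map_block: "map f (block xs i k) = block (map f xs) i k"
  by (simp add: block_def take_map drop_map)

lemma take_block: "m \<le> k \<Longrightarrow> take m (block xs i k) = block xs i m"
  by (simp add: block_def min_absorb1)

lemma drop_block: "m \<le> k \<Longrightarrow> drop (k - m) (block xs i k) = block xs (i + k - m) m"
  by (simp add: block_def drop_take add.commute)

lemma map_revcomp:
  assumes "\<And>s. f (comp s) = (\<not> f s)"
  shows "map f (revcomp ys) = rev (map Not (map f ys))"
  by (simp add: revcomp_def rev_map assms comp_def)

lemma length_filter_Not_rev_map_Not:
  "length (filter Not (rev (map Not bs))) = length bs - length (filter Not bs)"
proof -
  have "length (filter Not (rev (map Not bs))) = length (filter (\<lambda>b. b) bs)"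
    by (simp add: rev_filter[symmetric] filter_map comp_def)
  then show ?thesis
    using sum_length_filter_compl[of Not bs] by simp
qed

lemma zero_dominant_window:
  assumes "zero_dominant m c" and "p + m \<le> length c"
  shows "m < 2 * length (filter Not (block c p m))"
proof -
  have "real m / 2 < real (length (filter Not (block c p m)))"
    using assms by (simp add: zero_dominant_def)
  then show ?thesis by linarith
qed

lemma zero_dominant_no_reverse_negation:
  assumes dom: "zero_dominant m c" and "m \<le> k"
    and i: "i + k \<le> length c" and j: "j + k \<le> length c"
  shows "block c j k \<noteq> rev (map Not (block c i k))"
proof
  assume eq: "block c j k = rev (map Not (block c i k))"
  let ?w = "block c (i + k - m) m"
  have "block c j m = take m (rev (map Not (block c i k)))"
    using take_block[OF \<open>m \<le> k\<close>, of c j] by (simp add: eq)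
  also have "\<dots> = rev (map Not (drop (k - m) (block c i k)))"
    using length_block[OF i] by (simp add: take_rev drop_map)
  also have "\<dots> = rev (map Not ?w)"
    by (simp only: drop_block[OF \<open>m \<le> k\<close>])
  finally have window: "block c j m = rev (map Not ?w)" .
  define zeros_w where "zeros_w = length (filter Not ?w)"
  have "length (filter Not (block c j m)) = m - zeros_w"
    using i \<open>m \<le> k\<close> by (simp add: window length_filter_Not_rev_map_Not length_block zeros_w_def)
  moreover have "m < 2 * length (filter Not (block c j m))"
    using zero_dominant_window[OF dom] j \<open>m \<le> k\<close> by simp
  moreover have "m < 2 * zeros_w"
    using zero_dominant_window[OF dom] i \<open>m \<le> k\<close> by (simp add: zeros_w_def)
  ultimately show False by linarith
qed

lemma SSA_if_zero_dominant_map: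
  assumes "\<And>s. f (comp s) = (\<not> f s)" and "zero_dominant m (map f x)"
  shows "SSA m x"
  unfolding SSA_def
proof (intro allI impI notI)
  fix i j k
  assume "m \<le> k" "i + k \<le> length x" "j + k \<le> length x"
    and eq: "block x j k = revcomp (block x i k)"
  have "block (map f x) j k = rev (map Not (block (map f x) i k))"
    using arg_cong[OF eq, of "map f"] by (simp add: map_revcomp assms(1) map_block)
  with zero_dominant_no_reverse_negation[OF assms(2) \<open>m \<le> k\<close>] \<open>i + k \<le> length x\<close>
    \<open>j + k \<le> length x\<close>
  show False by simp
qed

lemma rll_if_rll_map:
  assumes "rll l (map f xs)"
  shows "rll l xs"
  unfolding rll_def
proof (intro allI impI)
  fix i j
  assume "i \<le> j" "j < length xs" and run: "\<forall>k. i \<le> k \<and> k \<le> j \<longrightarrow> xs ! k = xs ! i"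
  have "map f xs ! k = map f xs ! i" if "i \<le> k \<and> k \<le> j" for k
    using that run \<open>j < length xs\<close> by (metis nth_map le_less_trans order.trans)
  moreover have "j < length (map f xs)"
    using \<open>j < length xs\<close> by simp
  ultimately show "j - i + 1 \<le> l"
    using assms \<open>i \<le> j\<close> unfolding rll_def by blast
qed

lemma wt_GC_eq_wt_map: "wt_GC xs = wt (map (\<lambda>s. snd (tau s)) xs)"
  by (simp add: wt_GC_def wt_def filter_map comp_def snd_tau_iff_GC)

lemma tau_inv_seq_projections:
  assumes "length c = length d"
  shows "map (\<lambda>s. fst (tau s)) (tau_inv_seq (interleave c d)) = c"
    and "map (\<lambda>s. snd (tau s)) (tau_inv_seq (interleave c d)) = d"
  using arg_cong[OF map_tau_tau_inv_seq[of "interleave c d"], of "map fst"]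
    arg_cong[OF map_tau_tau_inv_seq[of "interleave c d"], of "map snd"] assms
  by (simp_all add: interleave_def comp_def)

theorem lemma4:
  fixes n l :: nat and \<epsilon> :: real and c d :: "bool list"
  assumes "n > 0" and "l > 0" and "0 < \<epsilon>" and "\<epsilon> < 1/2"
    and "length c = n" and "length d = n"
    and "zero_dominant 3 c" and "rll l c"
    and "balanced \<epsilon> d"
  shows "SSA 3 (tau_inv_seq (interleave c d)) \<and> rll l (tau_inv_seq (interleave c d))
         \<and> GC_balanced \<epsilon> (tau_inv_seq (interleave c d))"
proof -
  define x where "x = tau_inv_seq (interleave c d)"
  have c_track: "map (\<lambda>s. fst (tau s)) x = c"
    and d_track: "map (\<lambda>s. snd (tau s)) x = d"
    using tau_inv_seq_projections assms(5,6) unfolding x_def by simp_all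
  have "SSA 3 x"
    using SSA_if_zero_dominant_map[of "\<lambda>s. fst (tau s)"] c_track assms(7) by simp
  moreover have "rll l x"
    using rll_if_rll_map[of l "\<lambda>s. fst (tau s)" x] c_track assms(8) by simp
  moreover have "GC_balanced \<epsilon> x"
    using assms(9) wt_GC_eq_wt_map[of x] d_track
    by (metis GC_balanced_def balanced_def length_map)
  ultimately show ?thesis unfolding x_def by blast
qed

end
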